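(* Let $0<s\le1$ and let $\beta\in(1,2)$ be such that the $\beta$-expansion of $1$ terminates; fix $m\in\mathbb N$, $\bar p\in[0,1]^{2^m}$ and $\epsilon>0$. Let $Q(s,\beta)=\beta^{-s}\sum_{i=0}^\infty(1-\beta^{-1})^{is}$. Suppose there are a strictly increasing sequence $(M_k)$ of natural numbers and $0\le c<1$ such that \[ N^s_\infty\big([0,1)\cap G^{\beta,m}_{\bar p}(M_k,\epsilon)\big)<\frac{c}{2Q(s,\beta)}\quad\text{for all }k. \] Then for each cylinder $C$ of $f_\beta$ there is $K_C$ such that $N^s_\infty\big(C\cap G^{\beta,m}_{\bar p}(M_k,\epsilon/2)\big)<c|C|^s$ for all $k>K_C$.
   Context: For $\beta\in(1,2)$ let $f_\beta(x)=\beta x \bmod 1$ on $[0,1)$ and $d_n(x,\beta)=\lfloor \beta f_\beta^n(x)\rfloor$, $n\ge0$; $(x_n)_{n\ge0}=(d_n(x,\beta))_{n\ge0}\in\{0,1\}^{\mathbb N}$ is the $\beta$-expansion of $x$. The expansion of $1$ terminates if $d(1,\beta)=j_0\dots j_{k-1}0^\infty$. A cylinder of generation $n$ is a nonempty set $[i_0\cdots i_{n-1}]=\{x\in[0,1): d_k(x,\beta)=i_k,\ 0\le k<n\}$. For a word $w$ of length $m$ and $n>m$, $\tau^\beta_w(x,n)=\#\{i\in\{0,\dots,n-m-1\}: x_i\dots x_{i+m-1}=w\}$; enumerating binary words of length $m$ as $w_1,\dots,w_{2^m}$, $G^{\beta,m}_{\bar p}(n,\epsilon)=\{x\in[0,1):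 p_{w_j}-\epsilon<\tau^\beta_{w_j}(x,n)/(n-m)<p_{w_j}+\epsilon,\ j=1,\dots,2^m\}$. $N^s_\infty(F)=\inf\{\sum_i|C_i|^s: F\subset\bigcup_iC_i\}$, the infimum over countable covers by cylinders of $f_\beta$. *)

theory Defs
  imports "HOL-Analysis.Analysis"
begin

definition fbeta :: "real \<Rightarrow> real \<Rightarrow> real" where
  "fbeta \<beta> x = frac (\<beta> * x)"

definition digit :: "real \<Rightarrow> nat \<Rightarrow> real \<Rightarrow> nat" where
  "digit \<beta> n x = nat \<lfloor>\<beta> * (fbeta \<beta> ^^ n) x\<rfloor>"

definition expansion_of_one_terminates :: "real \<Rightarrow> bool" where
  "expansion_of_one_terminates \<beta> \<longleftrightarrow> (\<exists>k. \<forall>n\<ge>k. digit \<beta> n 1 = 0)"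

definition cyl :: "real \<Rightarrow> nat list \<Rightarrow> real set" where
  "cyl \<beta> w = {x. 0 \<le> x \<and> x < 1 \<and> (\<forall>k<length w. digit \<beta> k x = w ! k)}"

definition is_cylinder :: "real \<Rightarrow> real set \<Rightarrow> bool" where
  "is_cylinder \<beta> C \<longleftrightarrow> (\<exists>w. C = cyl \<beta> w \<and> C \<noteq> {})"

definition tau :: "real \<Rightarrow> nat list \<Rightarrow> real \<Rightarrow> nat \<Rightarrow> nat" where
  "tau \<beta> w x n = card {i. i < n - length w \<and>
      (\<forall>j<length w. digit \<beta> (i + j) x = w ! j)}"

(* The set G^{beta,m}_p(n,eps); p assigns a frequency to each binary word of length m. *)
definition Gset :: "real \<Rightarrow> nat \<Rightarrow> (nat list \<Rightarrow> real) \<Rightarrow> nat \<Rightarrow> real \<Rightarrow> real set" where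
  "Gset \<beta> m p n eps = {x. 0 \<le> x \<and> x < 1 \<and>
     (\<forall>w. length w = m \<and> set w \<subseteq> {0, 1} \<longrightarrow>
        p w - eps < real (tau \<beta> w x n) / real (n - m) \<and>
        real (tau \<beta> w x n) / real (n - m) < p w + eps)}"

definition Ninf :: "real \<Rightarrow> real \<Rightarrow> real set \<Rightarrow> ennreal" where
  "Ninf \<beta> s F = (INF \<C> \<in> {\<C>. countable \<C> \<and> (\<forall>C\<in>\<C>. is_cylinder \<beta> C) \<and> F \<subseteq> \<Union>\<C>}.
      infsum (\<lambda>C. ennreal (diameter C powr s)) \<C>)"

definition Qconst :: "real \<Rightarrow> real \<Rightarrow> real" where
  "Qconst s \<beta> = \<beta> powr (-s) * (\<Sum>i. (1 - 1 / \<beta>) powr (real i * s))"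

end

theory Submission
  imports Defs
begin

(* Let C be a cylinder.  Write C = [u] for a word u that is long enough to
   control the size of C, |C| \<ge> b^-(|u|+1) (obtained by padding with zeros, which does not
   change a short cylinder).  On [u] the map f_b^|u| is affine with slope b^|u|, so
   prefixing u to a cylinder D scales its diameter by at most b^-|u|.  Shifting a point
   by |u| changes every word count tau by at most |u|, so for block lengths M \<gg> |u|
   the shift maps [u] \<inter> G(M, eps/2) into G(M, eps).  Hence
   every cover of G(M, eps) by cylinders pulls back to a cover of [u] \<inter> G(M, eps/2) of
   weight at most b^-|u|s times the original, giving
     N_s([u] \<inter> G(M, eps/2)) < b^-|u|s c / (2Q) \<le> b^s |C|^s c / (2Q) \<le> c |C|^s,
   where the last step is the elementary estimate b^s \<le> 2 Q(s,b) for 1 < b < 2, 0 < s \<le> 1.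
   The file develops the orbit and cylinder geometry, the frequency shift estimate,
   the pull-back of covers and the bound on Q, and then assembles the theorem. *)

section \<open>Orbits of the beta-transformation\<close>

lemma fbeta_bounds: "0 \<le> fbeta b x" "fbeta b x < 1"
  by (auto simp: fbeta_def frac_lt_1)

lemma orbit_bounds:
  assumes "0 \<le> x" "x < 1"
  shows "0 \<le> (fbeta b ^^ n) x" "(fbeta b ^^ n) x < 1"
  using assms by (cases n; simp add: fbeta_bounds)+

lemma orbit_Suc: "(fbeta b ^^ Suc i) x = b * (fbeta b ^^ i) x - \<lfloor>b * (fbeta b ^^ i) x\<rfloor>"
  by (simp add: fbeta_def frac_def)

lemma digit_shift: "digit b (n + j) x = digit b j ((fbeta b ^^ n) x)"
  by (simp add: digit_def add.commute[of n j] funpow_add)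

lemma orbit_growth:
  fixes b x :: real
  assumes "0 \<le> b" "0 \<le> x"
  shows "(fbeta b ^^ (j + d)) x \<le> b ^ d * (fbeta b ^^ j) x"
proof (induction d)
  case 0 then show ?case by simp
next
  case (Suc d)
  let ?y = "(fbeta b ^^ (j + d)) x"
  have "0 \<le> ?y" using assms by (cases "j + d") (simp_all add: fbeta_bounds)
  then have "0 \<le> \<lfloor>b * ?y\<rfloor>" using assms by simp
  then have "(fbeta b ^^ (j + Suc d)) x \<le> b * ?y"
    by (simp add: fbeta_def frac_def)
  also have "\<dots> \<le> b * (b ^ d * (fbeta b ^^ j) x)" using Suc assms by (simp add: mult_left_mono)
  finally show ?case by simp
qed

section \<open>Geometry of cylinders\<close>

lemma greedy_expansion:
  fixes b x :: real
  assumes b: "0 < b" and x: "0 \<le> x"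
  shows "x = (\<Sum>j<n. real (digit b j x) / b ^ Suc j) + (fbeta b ^^ n) x / b ^ n"
proof (induction n)
  case 0 then show ?case by simp
next
  case (Suc n)
  have "0 \<le> (fbeta b ^^ n) x" using x by (cases n) (simp_all add: fbeta_bounds)
  then have "real (digit b n x) = real_of_int \<lfloor>b * (fbeta b ^^ n) x\<rfloor>"
    using b by (simp add: digit_def)
  then have "(fbeta b ^^ n) x / b ^ n
      = real (digit b n x) / b ^ Suc n + (fbeta b ^^ Suc n) x / b ^ Suc n"
    using b by (simp add: fbeta_def frac_def field_simps)
  then show ?case using Suc by simp
qed

lemma cyl_bounded: "bounded (cyl b w)"
  by (rule bounded_subset[of "{0..1}"]) (auto simp: cyl_def)

lemma cyl_dist_le_diameter: "x \<in> cyl b w \<Longrightarrow> y \<in> cyl b w \<Longrightarrow> \<bar>x - y\<bar> \<le> diameter (cyl b w)"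
  using diameter_bounded_bound[OF cyl_bounded] by (simp add: dist_real_def)

lemma cyl_difference:
  fixes b :: real
  assumes b: "0 < b" and x: "x \<in> cyl b u" and y: "y \<in> cyl b u"
  shows "x - y = ((fbeta b ^^ length u) x - (fbeta b ^^ length u) y) / b ^ length u"
proof -
  have "0 \<le> x" "0 \<le> y" using x y by (auto simp: cyl_def)
  moreover have "(\<Sum>j<length u. real (digit b j x) / b ^ Suc j)
               = (\<Sum>j<length u. real (digit b j y) / b ^ Suc j)"
    using x y by (intro sum.cong) (auto simp: cyl_def)
  ultimately show ?thesis
    using greedy_expansion[OF b, of x "length u"] greedy_expansion[OF b, of y "length u"]
    by (simp add: diff_divide_distrib)
qed

lemma mem_cyl_append:
  "x \<in> cyl b (u @ v) \<longleftrightarrow> x \<in> cyl b u \<and> (fbeta b ^^ length u) x \<in> cyl b v"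
proof -
  have "(\<forall>k<length (u @ v). digit b k x = (u @ v) ! k) \<longleftrightarrow>
        (\<forall>k<length u. digit b k x = u ! k) \<and>
        (\<forall>j<length v. digit b (length u + j) x = v ! j)"
    by (auto simp: nth_append) (metis add_diff_inverse_nat add_less_cancel_left)
  then show ?thesis
    by (auto simp: cyl_def digit_shift orbit_bounds)
qed

lemma diameter_cyl_append:
  fixes b :: real
  assumes b: "0 < b"
  shows "diameter (cyl b (u @ v)) \<le> diameter (cyl b v) / b ^ length u"
proof (rule diameter_le)
  show "cyl b (u @ v) \<noteq> {} \<or> 0 \<le> diameter (cyl b v) / b ^ length u"
    using diameter_ge_0[OF cyl_bounded] b by simp
next
  fix x y assume "x \<in> cyl b (u @ v)" "y \<in> cyl b (u @ v)"
  then have xy: "x \<in> cyl b u" "y \<in> cyl b u"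
    and "(fbeta b ^^ length u) x \<in> cyl b v" "(fbeta b ^^ length u) y \<in> cyl b v"
    by (auto simp: mem_cyl_append)
  from this(3,4) have "\<bar>(fbeta b ^^ length u) x - (fbeta b ^^ length u) y\<bar> \<le> diameter (cyl b v)"
    by (rule cyl_dist_le_diameter)
  then show "norm (x - y) \<le> diameter (cyl b v) / b ^ length u"
    using cyl_difference[OF b xy] b by (simp add: abs_divide divide_right_mono)
qed

(* A translate x + e stays in the cylinder of x as long as the translated orbit,
   which moves by b^i e, does not leave [0,1) during the first |u| steps. *)
lemma cyl_translate:
  assumes x: "x \<in> cyl b u"
    and inside: "\<And>i. i \<le> length u \<Longrightarrow>
       0 \<le> (fbeta b ^^ i) x + b ^ i * e \<and> (fbeta b ^^ i) x + b ^ i * e < 1"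
  shows "x + e \<in> cyl b u"
proof -
  let ?f = "\<lambda>i. (fbeta b ^^ i) x"
  have same_floor: "\<lfloor>b * ?f i + b ^ Suc i * e\<rfloor> = \<lfloor>b * ?f i\<rfloor>" if "i < length u" for i
  proof -
    have "b * ?f i + b ^ Suc i * e = of_int \<lfloor>b * ?f i\<rfloor> + (?f (Suc i) + b ^ Suc i * e)"
      by (simp add: fbeta_def frac_def)
    then show ?thesis using inside[of "Suc i"] that by (intro floor_unique) auto
  qed
  have orbit: "(fbeta b ^^ i) (x + e) = ?f i + b ^ i * e" if "i \<le> length u" for i
    using that
  proof (induction i)
    case 0 then show ?case by simp
  next
    case (Suc i)
    then have "b * (fbeta b ^^ i) (x + e) = b * ?f i + b ^ Suc i * e"
      by (simp add: algebra_simps)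
    then show ?case unfolding orbit_Suc using same_floor[of i] Suc.prems by simp
  qed
  have "digit b k (x + e) = digit b k x" if "k < length u" for k
  proof -
    have "b * (fbeta b ^^ k) (x + e) = b * ?f k + b ^ Suc k * e"
      using orbit[of k] that by (simp add: algebra_simps)
    then show ?thesis using same_floor[OF that] by (simp add: digit_def)
  qed
  then show ?thesis using x inside[of 0] by (auto simp: cyl_def)
qed

lemma cyl_left_endpoint:
  fixes b :: real
  assumes b: "0 < b" and x: "x \<in> cyl b u"
  shows "x - (fbeta b ^^ length u) x / b ^ length u \<in> cyl b u"
proof -
  let ?N = "length u" and ?y = "(fbeta b ^^ length u) x"
  have x01: "0 \<le> x" "x < 1" using x by (auto simp: cyl_def)
  have "x + (- ?y / b ^ ?N) \<in> cyl b u"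
  proof (rule cyl_translate[OF x])
    fix i assume i: "i \<le> ?N"
    have "b ^ ?N = b ^ i * b ^ (?N - i)" using i by (simp add: power_add[symmetric])
    then have shift: "b ^ i * (- ?y / b ^ ?N) = - (?y / b ^ (?N - i))" using b by simp
    have "?y \<le> b ^ (?N - i) * (fbeta b ^^ i) x"
      using orbit_growth[of b x i "?N - i"] b x01 i by simp
    then have "?y / b ^ (?N - i) \<le> (fbeta b ^^ i) x" using b by (simp add: divide_le_eq mult.commute)
    moreover have "0 \<le> ?y / b ^ (?N - i)" "(fbeta b ^^ i) x < 1"
      using orbit_bounds[OF x01] b by auto
    ultimately show "0 \<le> (fbeta b ^^ i) x + b ^ i * (- ?y / b ^ ?N)
        \<and> (fbeta b ^^ i) x + b ^ i * (- ?y / b ^ ?N) < 1"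
      unfolding shift by linarith
  qed
  then show ?thesis by simp
qed

(* Nonempty cylinders are nondegenerate intervals: move x slightly to the right. *)
lemma cyl_diameter_pos:
  fixes b :: real
  assumes b: "0 < b" and ne: "cyl b u \<noteq> {}"
  shows "0 < diameter (cyl b u)"
proof -
  obtain x where x: "x \<in> cyl b u" using ne by auto
  have x01: "0 \<le> x" "x < 1" using x by (auto simp: cyl_def)
  let ?gap = "\<lambda>j. (1 - (fbeta b ^^ j) x) / b ^ j"
  define h where "h = (MIN j\<in>{..length u}. ?gap j) / 2"
  have "0 < ?gap j" for j using orbit_bounds(2)[OF x01, where b=b and n=j] b by simp
  then have hpos: "0 < h" unfolding h_def by (simp add: Min_gr_iff)
  have "x + h \<in> cyl b u"
  proof (rule cyl_translate[OF x])
    fix i assume "i \<le> length u"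
    then have "h \<le> ?gap i / 2" unfolding h_def by (intro divide_right_mono Min_le) auto
    then have "b ^ i * h < 1 - (fbeta b ^^ i) x"
      using orbit_bounds(2)[OF x01, where b=b and n=i] b by (simp add: field_simps)
    moreover have "0 \<le> (fbeta b ^^ i) x" "0 \<le> b ^ i * h" using orbit_bounds(1)[OF x01] b hpos by auto
    ultimately show "0 \<le> (fbeta b ^^ i) x + b ^ i * h \<and> (fbeta b ^^ i) x + b ^ i * h < 1"
      by linarith
  qed
  then have "\<bar>(x + h) - x\<bar> \<le> diameter (cyl b u)" using x by (rule cyl_dist_le_diameter)
  then show ?thesis using hpos by simp
qed

(* If the cylinder of u is shorter than b^-(|u|+1), every point has next digit 0,
   so the word u can be padded by a zero without changing the cylinder. *)
lemma cyl_append_zero: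
  fixes b :: real
  assumes b: "0 < b" and small: "diameter (cyl b u) < 1 / b ^ (length u + 1)"
  shows "cyl b (u @ [0]) = cyl b u"
proof (intro antisym subsetI)
  fix x assume "x \<in> cyl b (u @ [0])"
  then show "x \<in> cyl b u" by (simp add: mem_cyl_append)
next
  fix x assume x: "x \<in> cyl b u"
  let ?N = "length u" and ?y = "(fbeta b ^^ length u) x"
  have x01: "0 \<le> x" "x < 1" using x by (auto simp: cyl_def)
  have "\<bar>x - (x - ?y / b ^ ?N)\<bar> \<le> diameter (cyl b u)"
    using cyl_dist_le_diameter[OF x cyl_left_endpoint[OF b x]] .
  then have "?y / b ^ ?N < 1 / b ^ (?N + 1)" using small orbit_bounds[OF x01] b by simp
  then have "b * ?y < 1" using b by (simp add: field_simps)
  then have "digit b 0 ?y = 0" using orbit_bounds[OF x01] b by (simp add: digit_def floor_eq_iff)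
  then have "?y \<in> cyl b [0]" using orbit_bounds[OF x01] by (simp add: cyl_def)
  then show "x \<in> cyl b (u @ [0])" using x by (simp add: mem_cyl_append)
qed

(* Every cylinder is the cylinder of a word u whose length matches its size:
   |C| \<ge> b^-(|u|+1).  Pad with zeros until this holds; it must since |C| > 0. *)
lemma cyl_word_of_large_diameter:
  fixes b :: real
  assumes b: "1 < b" and ne: "cyl b w \<noteq> {}"
  obtains u where "cyl b u = cyl b w" "1 / b ^ (length u + 1) \<le> diameter (cyl b w)"
proof -
  let ?d = "diameter (cyl b w)"
  have padding: "\<exists>u. cyl b u = cyl b w \<and> (1 / b ^ (length u + 1) \<le> ?d \<or> n \<le> length u)" for n
  proof (induction n)
    case 0 then show ?case by blast
  next
    case (Suc n)
    then obtain u where u: "cyl b u = cyl b w" and "1 / b ^ (length u + 1) \<le> ?d \<or> n \<le> length u"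
      by blast
    show ?case
    proof (cases "1 / b ^ (length u + 1) \<le> ?d")
      case True
      with u show ?thesis by blast
    next
      case False
      then have "cyl b (u @ [0]) = cyl b w" using cyl_append_zero[of b u] b u by simp
      with False \<open>_ \<or> n \<le> length u\<close> show ?thesis by (intro exI[of _ "u @ [0]"]) auto
    qed
  qed
  obtain n where n: "(1 / b) ^ n < ?d"
    using real_arch_pow_inv[OF cyl_diameter_pos[OF _ ne], of "1 / b"] b by auto
  obtain u where u: "cyl b u = cyl b w" and "1 / b ^ (length u + 1) \<le> ?d \<or> n \<le> length u"
    using padding by blast
  moreover have "1 / b ^ (length u + 1) \<le> (1 / b) ^ n" if "n \<le> length u"
  proof -
    have "b ^ n \<le> b ^ (length u + 1)" using that b by (intro power_increasing) auto
    then show ?thesis using b by (simp add: power_one_over frac_le)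
  qed
  ultimately show ?thesis using n that by fastforce
qed

section \<open>Word frequencies along the orbit\<close>

lemma tau_shift:
  "\<bar>real (tau b w x M) - real (tau b w ((fbeta b ^^ N) x) M)\<bar> \<le> real N"
proof -
  define L where "L = M - length w"
  define P where "P = (\<lambda>i. \<forall>j<length w. digit b (i + j) x = w ! j)"
  define A where "A = {i. i < L \<and> P i}"
  define B where "B = {i. N \<le> i \<and> i < L + N \<and> P i}"
  have tau_x: "tau b w x M = card A" unfolding tau_def A_def P_def L_def by simp
  have "B = (\<lambda>i. N + i) ` {i. i < L \<and> P (N + i)}"
  proof (intro set_eqI iffI)
    fix i assume "i \<in> B"
    then show "i \<in> (\<lambda>i. N + i) ` {i. i < L \<and> P (N + i)}"
      by (intro image_eqI[of _ _ "i - N"]) (auto simp: B_def)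
  qed (auto simp: B_def)
  then have "card B = card {i. i < L \<and> P (N + i)}" by (simp add: card_image)
  also have "\<dots> = tau b w ((fbeta b ^^ N) x) M"
    unfolding tau_def L_def P_def by (simp add: digit_shift[symmetric] add.assoc)
  finally have tau_shifted: "tau b w ((fbeta b ^^ N) x) M = card B" ..
  have finite: "finite A" "finite B" unfolding A_def B_def by auto
  have "card A \<le> card (B \<union> {..<N})" by (rule card_mono) (auto simp: finite A_def B_def)
  then have "card A \<le> card B + N" using card_Un_le[of B "{..<N}"] by simp
  moreover have "card B \<le> card (A \<union> {L..<L + N})" by (rule card_mono) (auto simp: finite A_def B_def)
  then have "card B \<le> card A + N" using card_Un_le[of A "{L..<L + N}"] by simp
  ultimately show ?thesis unfolding tau_x tau_shifted by linarith
qed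

lemma Gset_shift:
  assumes x: "x \<in> Gset b m p M (eps / 2)" and eps: "0 < eps"
    and long: "2 * real N / eps < real (M - m)"
  shows "(fbeta b ^^ N) x \<in> Gset b m p M eps"
proof -
  have x01: "0 \<le> x" "x < 1" using x by (auto simp: Gset_def)
  define L where "L = real (M - m)"
  have "0 \<le> 2 * real N / eps" using eps by simp
  then have L: "0 < L" using long unfolding L_def by linarith
  then have NL: "real N / L < eps / 2" using long eps unfolding L_def by (simp add: field_simps)
  have "p w - eps < real (tau b w ((fbeta b ^^ N) x) M) / L \<and>
        real (tau b w ((fbeta b ^^ N) x) M) / L < p w + eps"
    if w: "length w = m \<and> set w \<subseteq> {0, 1}" for w
  proof -
    let ?tx = "real (tau b w x M)" and ?ty = "real (tau b w ((fbeta b ^^ N) x) M)"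
    have "p w - eps / 2 < ?tx / L" "?tx / L < p w + eps / 2"
      using x w unfolding Gset_def L_def by auto
    moreover have "\<bar>?tx / L - ?ty / L\<bar> \<le> real N / L"
      using tau_shift[of b w x M N] L by (simp add: diff_divide_distrib[symmetric] divide_right_mono)
    ultimately show ?thesis using NL by linarith
  qed
  then show ?thesis using orbit_bounds[OF x01] unfolding Gset_def L_def by auto
qed

section \<open>Pulling covers back to a cylinder\<close>

lemma ennreal_infsum_image_le:
  fixes g :: "'b \<Rightarrow> ennreal" and f :: "'a \<Rightarrow> ennreal"
  assumes B: "B \<subseteq> h ` A" and le: "\<And>x. x \<in> A \<Longrightarrow> g (h x) \<le> a * f x"
  shows "infsum g B \<le> a * infsum f A"
  unfolding nonneg_infsum_complete[of B g, OF zero_le]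
proof (rule SUP_least)
  fix F assume "F \<in> {F. finite F \<and> F \<subseteq> B}"
  then obtain G where G: "G \<subseteq> A" "finite G" "F = h ` G"
    using B finite_subset_image[of F h A] by blast
  have "sum g F \<le> sum (g \<circ> h) G" unfolding G(3) by (rule sum_image_le[OF G(2)]) simp
  also have "\<dots> \<le> a * sum f G"
    unfolding sum_distrib_left using G(1) le by (intro sum_mono) auto
  also have "\<dots> \<le> a * infsum f A"
  proof (rule mult_left_mono)
    show "sum f G \<le> infsum f A"
      unfolding nonneg_infsum_complete[of A f, OF zero_le] using G by (intro SUP_upper) auto
  qed simp
  finally show "sum g F \<le> a * infsum f A" .
qed

(* Main estimate: a cover of G(M, eps) by cylinders D, pulled back by prefixing the word u,
   covers [u] \<inter> G(M, eps/2) with weights scaled by b^-|u| s. *)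
lemma Ninf_cylinder_pullback:
  fixes b s :: real
  assumes b: "0 < b" and s: "0 \<le> s" and eps: "0 < eps"
    and long: "2 * real (length u) / eps < real (M - m)"
    and bound: "Ninf b s ({0..<1} \<inter> Gset b m p M eps) < r"
  shows "Ninf b s (cyl b u \<inter> Gset b m p M (eps / 2))
         < ennreal ((1 / b ^ length u) powr s) * r"
proof -
  let ?a = "ennreal ((1 / b ^ length u) powr s)"
  let ?g = "\<lambda>C. ennreal (diameter C powr s)"
  obtain \<D> where \<D>: "countable \<D>" "\<forall>D\<in>\<D>. is_cylinder b D"
      "{0..<1} \<inter> Gset b m p M eps \<subseteq> \<Union>\<D>" and small: "infsum ?g \<D> < r"
    using bound unfolding Ninf_def INF_less_iff by auto
  define word where "word D = (SOME v. D = cyl b v)" for D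
  have word: "D = cyl b (word D)" if "D \<in> \<D>" for D
    using \<D>(2) that unfolding word_def is_cylinder_def by (metis (mono_tags) someI_ex)
  define pull where "pull D = cyl b (u @ word D)" for D
  define \<C> where "\<C> = pull ` \<D> - {{}}"
  have cover: "cyl b u \<inter> Gset b m p M (eps / 2) \<subseteq> \<Union>\<C>"
  proof
    fix x assume x: "x \<in> cyl b u \<inter> Gset b m p M (eps / 2)"
    then have "(fbeta b ^^ length u) x \<in> {0..<1} \<inter> Gset b m p M eps"
      using Gset_shift[OF _ eps long] orbit_bounds[of x] by (auto simp: cyl_def)
    then obtain D where "D \<in> \<D>" "(fbeta b ^^ length u) x \<in> D" using \<D>(3) by blast
    moreover from this have "x \<in> pull D" using x word unfolding pull_def by (auto simp: mem_cyl_append)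
    ultimately show "x \<in> \<Union>\<C>" unfolding \<C>_def by blast
  qed
  have "countable \<C>" "\<forall>C\<in>\<C>. is_cylinder b C"
    using \<D>(1) unfolding \<C>_def pull_def is_cylinder_def by auto
  then have "Ninf b s (cyl b u \<inter> Gset b m p M (eps / 2)) \<le> infsum ?g \<C>"
    unfolding Ninf_def using cover by (intro INF_lower) auto
  also have "\<dots> \<le> ?a * infsum ?g \<D>"
  proof (rule ennreal_infsum_image_le)
    show "\<C> \<subseteq> pull ` \<D>" unfolding \<C>_def by auto
    fix D assume "D \<in> \<D>"
    then have "diameter (pull D) \<le> diameter D / b ^ length u"
      using diameter_cyl_append[OF b, of u "word D"] word unfolding pull_def by simp
    then have "diameter (pull D) powr s \<le> (diameter D / b ^ length u) powr s"
      using diameter_ge_0[OF cyl_bounded] s unfolding pull_def by (intro powr_mono2) auto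
    also have "\<dots> = (1 / b ^ length u) powr s * diameter D powr s"
      by (simp add: powr_mult[symmetric])
    finally show "?g (pull D) \<le> ?a * ?g D" by (simp add: ennreal_mult[symmetric] ennreal_leI)
  qed
  also have "\<dots> < ?a * r" using small b by (intro ennreal_mult_strict_left_mono) auto
  finally show ?thesis .
qed

section \<open>The constant Q(s, b)\<close>

(* Q(s,b) = b^-s / (1 - (1 - 1/b)^s), and b^s \<le> 2 Q(s,b) since b^2s (1 - (1 - 1/b)^s) \<le> b^2 (1/b) \<le> 2. *)
lemma Qconst_bound:
  fixes s b :: real
  assumes s: "0 < s" "s \<le> 1" and b: "1 < b" "b < 2"
  shows "b powr s \<le> 2 * Qconst s b" "0 < Qconst s b"
proof -
  define r where "r = 1 - 1 / b"
  define q where "q = r powr s"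
  have r: "0 < r" "r < 1" unfolding r_def using b by (auto simp: field_simps)
  have q: "0 < q" "q < 1" unfolding q_def using r s powr_less_mono2[of s r 1] by auto
  have "r \<le> q" unfolding q_def using powr_mono'[of s 1 r] r s by simp
  have "(1 - 1 / b) powr (real i * s) = q ^ i" for i
  proof -
    have "(1 - 1 / b) powr (real i * s) = (r powr s) powr real i"
      unfolding r_def by (simp add: powr_powr mult.commute)
    also have "\<dots> = q ^ i" unfolding q_def using r by (simp add: powr_realpow)
    finally show ?thesis .
  qed
  then have Q: "Qconst s b = b powr (- s) * (1 / (1 - q))"
    unfolding Qconst_def using suminf_geometric[of q] q by simp
  then show "0 < Qconst s b" using q b by simp
  have "b powr s * b powr s = b powr (2 * s)" by (simp add: powr_add[symmetric])
  also have "\<dots> \<le> b powr 2" using b s by (intro powr_mono) auto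
  finally have "b powr s * b powr s \<le> b\<^sup>2" using b by (simp add: powr_realpow[of b 2, simplified])
  then have "b powr s * b powr s * (1 - q) \<le> b\<^sup>2 * (1 - r)"
    using \<open>r \<le> q\<close> q by (intro mult_mono) auto
  also have "\<dots> = b" unfolding r_def using b by (simp add: power2_eq_square field_simps)
  finally have "b powr s * b powr s * (1 - q) \<le> 2" using b by simp
  then show "b powr s \<le> 2 * Qconst s b" unfolding Q using q b by (simp add: powr_minus field_simps)
qed

(* For a word u adapted to its cylinder, |C| \<ge> b^-(|u|+1), the factor b^-|u|s by which
   pulled-back covers shrink turns the bound c/(2Q) into c |C|^s. *)
lemma scaling_factor_bound:
  fixes s b d c :: real
  assumes s: "0 < s" "s \<le> 1" and b: "1 < b" "b < 2" and c: "0 \<le> c"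
    and d: "1 / b ^ (N + 1) \<le> d"
  shows "(1 / b ^ N) powr s * (c / (2 * Qconst s b)) \<le> c * d powr s"
proof -
  have Q: "b powr s \<le> 2 * Qconst s b" "0 < Qconst s b" using Qconst_bound[OF s b] by auto
  have "(1 / b ^ N) powr s = b powr s * (1 / b ^ (N + 1)) powr s"
    using b by (simp add: powr_mult[symmetric])
  also have "\<dots> \<le> b powr s * d powr s" using d b s by (intro mult_left_mono powr_mono2) auto
  also have "\<dots> \<le> 2 * Qconst s b * d powr s" using Q by (simp add: mult_right_mono)
  finally have "(1 / b ^ N) powr s * (c / (2 * Qconst s b))
      \<le> 2 * Qconst s b * d powr s * (c / (2 * Qconst s b))"
    using c Q by (intro mult_right_mono) auto
  also have "\<dots> = c * d powr s" using Q by simp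
  finally show ?thesis .
qed

theorem mainTheorem15:
  fixes s \<beta> eps c :: real and m :: nat and p :: "nat list \<Rightarrow> real" and M :: "nat \<Rightarrow> nat"
  assumes "0 < s" and "s \<le> 1"
    and "1 < \<beta>" and "\<beta> < 2"
    and "expansion_of_one_terminates \<beta>"
    and "\<forall>w. length w = m \<and> set w \<subseteq> {0, 1} \<longrightarrow> 0 \<le> p w \<and> p w \<le> 1"
    and "0 < eps"
    and "strict_mono M"
    and "0 \<le> c" and "c < 1"
    and "\<forall>k. Ninf \<beta> s ({0..<1} \<inter> Gset \<beta> m p (M k) eps) < ennreal (c / (2 * Qconst s \<beta>))"
  shows "\<forall>C. is_cylinder \<beta> C \<longrightarrow>
           (\<exists>K. \<forall>k>K. Ninf \<beta> s (C \<inter> Gset \<beta> m p (M k) (eps / 2)) < ennreal (c * diameter C powr s))"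
proof (intro allI impI)
  fix C assume "is_cylinder \<beta> C"
  then obtain w where "C = cyl \<beta> w" "cyl \<beta> w \<noteq> {}" unfolding is_cylinder_def by auto
  then obtain u where u: "cyl \<beta> u = C" and large: "1 / \<beta> ^ (length u + 1) \<le> diameter C"
    using cyl_word_of_large_diameter[OF assms(3)] by metis
  define K where "K = m + nat \<lceil>2 * real (length u) / eps\<rceil>"
  have "Ninf \<beta> s (C \<inter> Gset \<beta> m p (M k) (eps / 2)) < ennreal (c * diameter C powr s)"
    if "K < k" for k
  proof -
    have "K < M k" using that seq_suble[OF assms(8), of k] by simp
    then have long: "2 * real (length u) / eps < real (M k - m)" unfolding K_def by linarith
    have "Ninf \<beta> s (C \<inter> Gset \<beta> m p (M k) (eps / 2))
        < ennreal ((1 / \<beta> ^ length u) powr s) * ennreal (c / (2 * Qconst s \<beta>))"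
      using Ninf_cylinder_pullback[OF _ _ assms(7) long] assms(1,3,11) u by auto
    also have "\<dots> \<le> ennreal (c * diameter C powr s)"
      using scaling_factor_bound[OF assms(1-4,9) large]
      by (subst ennreal_mult'[symmetric]) (auto intro: ennreal_leI)
    finally show ?thesis .
  qed
  then show "\<exists>K. \<forall>k>K. Ninf \<beta> s (C \<inter> Gset \<beta> m p (M k) (eps / 2))
      < ennreal (c * diameter C powr s)" by blast
qed

end
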